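(* Let $m,n,a$ be nonnegative integers with $1\le m\le n+1$ and $n\le a$. Then $$\sum_{k=0}^{m-1}\binom{m}{k}^{-1}\binom{a}{n-k}^{-1}=g(m)\sum_{i=0}^{m-1}\frac{C(i)}{g(i)\,(i+2)\,(a+i-n+2)},$$ where $$g(m)=\frac{(a+m-n+1)!\,(a+4)!\,(m+1)}{2\,(a+m+3)!\,(a-n+2)!}$$ (and $g(i)$ is the same expression with $m$ replaced by $i$), and $$C(i)=(n+i+in+1)\binom{a}{n}^{-1}+(2i+a-n+3)\binom{a}{n-i}^{-1}.$$ *)

theory Defs
  imports Complex_Main
begin

text \<open>g(m) = (a+m-n+1)! (a+4)! (m+1) / (2 (a+m+3)! (a-n+2)!); used with n \<le> a,
  so the natural-number subtractions do not truncate.\<close>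
definition g :: "nat \<Rightarrow> nat \<Rightarrow> nat \<Rightarrow> real" where
  "g a n m = (fact (a + m - n + 1) * fact (a + 4) * real (m + 1)) /
             (2 * fact (a + m + 3) * fact (a - n + 2))"

definition C :: "nat \<Rightarrow> nat \<Rightarrow> nat \<Rightarrow> real" where
  "C a n i = real (n + i + i * n + 1) / real (a choose n)
           + real (2 * i + a - n + 3) / real (a choose (n - i))"

end

theory Submission
  imports Defs
begin

text \<open>Let \<open>t(m,k) = 1 / (binom(m,k) binom(a,n-k))\<close> and \<open>S(m) = \<Sum>\<^sub>k<m t(m,k)\<close>.
  Since \<open>t(m,k+1) / t(m,k) = (k+1)(a-n+k+1) / ((m-k)(n-k))\<close>, the differences of
  \<open>T(k) = (m+1-k)(n+1-k) t(m,k)\<close> are \<open>t(m,k)\<close> times a linear function of \<open>k\<close>; combined with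
  \<open>t(m+1,k) = t(m,k) (m+1-k)/(m+1)\<close> this telescopes to the first-order recurrence
  \<open>(a+m+4)(m+1) S(m+1) = (a+m-n+2)(m+2) S(m) + C(m)\<close>. The factor \<open>g\<close> solves the homogeneous
  recurrence, and variation of constants gives the closed form.\<close>

lemma linear_recurrence_solution:
  fixes S G p q c :: "nat \<Rightarrow> real"
  assumes "S 0 = 0"
    and rec: "\<And>i. i < N \<Longrightarrow> p i * S (Suc i) = q i * S i + c i"
    and hom: "\<And>i. i < N \<Longrightarrow> p i * G (Suc i) = q i * G i"
    and nz: "\<And>i. i < N \<Longrightarrow> p i \<noteq> 0 \<and> q i \<noteq> 0 \<and> G i \<noteq> 0"
    and "m \<le> N"
  shows "S m = G m * (\<Sum>i<m. c i / (G i * q i))"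
  using \<open>m \<le> N\<close>
proof (induction m)
  case 0
  then show ?case using \<open>S 0 = 0\<close> by simp
next
  case (Suc m)
  then have m: "m < N" by simp
  have "p m * S (Suc m) = q m * G m * (\<Sum>i<m. c i / (G i * q i)) + c m"
    using rec[OF m] Suc by simp
  also have "\<dots> = p m * G (Suc m) * (\<Sum>i<Suc m. c i / (G i * q i))"
    using hom[OF m] nz[OF m] by (simp add: field_simps)
  finally show ?case using nz[OF m] by simp
qed

definition recip_binom_prod :: "nat \<Rightarrow> nat \<Rightarrow> nat \<Rightarrow> nat \<Rightarrow> real" where
  "recip_binom_prod a n m k = 1 / (real (m choose k) * real (a choose (n - k)))"

lemma recip_binom_prod_Suc_index:
  assumes "k < m" "m \<le> n" "n \<le> a"
  shows "(real m - k) * (real n - k) * recip_binom_prod a n m (Suc k)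
       = (real k + 1) * (real a - n + k + 1) * recip_binom_prod a n m k"
proof -
  have m: "(real m - k) * real (m choose k) = (real k + 1) * real (m choose Suc k)"
    using binomial_absorb_comp[of m k] binomial_absorption[of k m] assms
    by (metis of_nat_mult of_nat_diff of_nat_Suc add.commute less_imp_le)
  have "(a - (n - Suc k)) * (a choose (n - Suc k)) = (n - k) * (a choose (n - k))"
    using binomial_absorb_comp[of a "n - Suc k"] binomial_absorption[of "n - Suc k" a] assms
    by (metis Suc_diff_Suc order.strict_trans2)
  moreover have "real (a - (n - Suc k)) = real a - n + k + 1" "real (n - k) = real n - k"
    using assms by auto
  ultimately have a: "(real a - n + k + 1) * real (a choose (n - Suc k)) = (real n - k) * real (a choose (n - k))"
    by (metis of_nat_mult)
  have key: "(real m - k) * (real n - k) * (real (m choose k) * real (a choose (n - k)))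
      = (real k + 1) * (real a - n + k + 1) * (real (m choose Suc k) * real (a choose (n - Suc k)))"
    using m a by (metis mult.assoc mult.left_commute)
  have "real (m choose k) > 0" "real (m choose Suc k) > 0"
       "real (a choose (n - k)) > 0" "real (a choose (n - Suc k)) > 0"
    using assms by auto
  with key show ?thesis
    unfolding recip_binom_prod_def by (simp add: divide_simps)
qed

lemma recip_binom_prod_Suc_top:
  assumes "k \<le> m" "n \<le> a"
  shows "(real m + 1) * recip_binom_prod a n (Suc m) k = (real m + 1 - k) * recip_binom_prod a n m k"
proof -
  have "(Suc m - k) * (Suc m choose k) = Suc m * (m choose k)"
    using binomial_absorb_comp[of "Suc m" k] by simp
  then have "real (Suc m - k) * real (Suc m choose k) = real (Suc m) * real (m choose k)"
    by (metis of_nat_mult)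
  moreover have "real (Suc m - k) = real m + 1 - k"
    using assms by simp
  ultimately have "(real m + 1 - k) * real (Suc m choose k) = (real m + 1) * real (m choose k)"
    by simp
  moreover have "real (Suc m choose k) > 0" "real (m choose k) > 0" "real (a choose (n - k)) > 0"
    using assms by auto
  ultimately show ?thesis
    unfolding recip_binom_prod_def by (simp add: divide_simps ac_simps)
qed

lemma recip_binom_prod_telescope:
  assumes "m \<le> n" "n \<le> a"
  shows "(\<Sum>k<m. ((real a + m + 4) * (real m + 1 - k) - (real a + m - n + 2) * (real m + 2))
                  * recip_binom_prod a n m k)
       = (real m + 1) * (real n + 1) * recip_binom_prod a n m 0
         - (real n + 1 - m) * recip_binom_prod a n m m"
proof -
  define T where "T k = (real m + 1 - k) * (real n + 1 - k) * recip_binom_prod a n m k" for k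
  have "((real a + m + 4) * (real m + 1 - k) - (real a + m - n + 2) * (real m + 2))
          * recip_binom_prod a n m k = T k - T (Suc k)" if "k < m" for k
    using recip_binom_prod_Suc_index[OF that assms] unfolding T_def
    by (simp add: algebra_simps)
  then have "(\<Sum>k<m. ((real a + m + 4) * (real m + 1 - k) - (real a + m - n + 2) * (real m + 2))
                  * recip_binom_prod a n m k) = (\<Sum>k<m. T k - T (Suc k))"
    by (intro sum.cong) auto
  also have "\<dots> = T 0 - T m"
    by (rule sum_lessThan_telescope')
  finally show ?thesis
    unfolding T_def by simp
qed

lemma C_eq_recip_binom_prod:
  assumes "n \<le> a"
  shows "C a n m = (real m + 1) * (real n + 1) * recip_binom_prod a n m 0
                 + (2 * real m + real a - real n + 3) * recip_binom_prod a n m m"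
proof -
  have "real (n + m + m * n + 1) = (real m + 1) * (real n + 1)"
       "real (2 * m + a - n + 3) = 2 * real m + real a - real n + 3"
    using assms by (auto simp: algebra_simps)
  then show ?thesis
    unfolding C_def recip_binom_prod_def by simp
qed

lemma recip_binom_sum_recurrence:
  assumes "m \<le> n" "n \<le> a"
  shows "(real a + m + 4) * (real m + 1) * (\<Sum>k<Suc m. recip_binom_prod a n (Suc m) k)
       = (real a + m - n + 2) * (real m + 2) * (\<Sum>k<m. recip_binom_prod a n m k) + C a n m"
proof -
  have "(real a + m + 4) * (real m + 1) * (\<Sum>k<Suc m. recip_binom_prod a n (Suc m) k)
      = (\<Sum>k<Suc m. (real a + m + 4) * (real m + 1 - k) * recip_binom_prod a n m k)"
    unfolding sum_distrib_left
    by (intro sum.cong) (use recip_binom_prod_Suc_top[OF _ assms(2)] in \<open>auto simp: mult.assoc\<close>)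
  also have "\<dots> = (\<Sum>k<m. (real a + m - n + 2) * (real m + 2) * recip_binom_prod a n m k
          + ((real a + m + 4) * (real m + 1 - k) - (real a + m - n + 2) * (real m + 2))
            * recip_binom_prod a n m k)
        + (real a + m + 4) * recip_binom_prod a n m m"
    by (simp add: algebra_simps)
  also have "\<dots> = (real a + m - n + 2) * (real m + 2) * (\<Sum>k<m. recip_binom_prod a n m k)
        + (\<Sum>k<m. ((real a + m + 4) * (real m + 1 - k) - (real a + m - n + 2) * (real m + 2))
                    * recip_binom_prod a n m k)
        + (real a + m + 4) * recip_binom_prod a n m m"
    by (simp only: sum.distrib sum_distrib_left)
  also have "\<dots> = (real a + m - n + 2) * (real m + 2) * (\<Sum>k<m. recip_binom_prod a n m k) + C a n m"
    unfolding recip_binom_prod_telescope[OF assms] C_eq_recip_binom_prod[OF assms(2)]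
    by (simp add: algebra_simps)
  finally show ?thesis .
qed

lemma g_pos: "n \<le> a \<Longrightarrow> g a n m > 0"
  unfolding g_def by (intro divide_pos_pos mult_pos_pos) auto

lemma g_Suc:
  assumes "n \<le> a"
  shows "(real a + m + 4) * (real m + 1) * g a n (Suc m) = (real a + m - n + 2) * (real m + 2) * g a n m"
proof -
  define F1 where "F1 = (fact (a + m - n + 1) :: real)"
  define F2 where "F2 = (fact (a - n + 2) :: real)"
  define F3 where "F3 = (fact (a + m + 3) :: real)"
  define F4 where "F4 = (fact (a + 4) :: real)"
  define A where "A = real a + m + 4"
  define B where "B = real a + m - n + 2"
  have "fact (a + Suc m - n + 1) = B * F1"
    using fact_Suc[of "a + m - n + 1", where 'a=real] assms unfolding F1_def B_def
    by (simp del: fact_Suc add: Suc_diff_le algebra_simps)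
  moreover have "fact (a + Suc m + 3) = A * F3"
    using fact_Suc[of "a + m + 3", where 'a=real] unfolding F3_def A_def
    by (simp del: fact_Suc add: algebra_simps)
  ultimately have g_Suc_eq: "g a n (Suc m) = B * F1 * F4 * (real m + 2) / (2 * (A * F3) * F2)"
    unfolding g_def F2_def F4_def by simp
  have g_eq: "g a n m = F1 * F4 * (real m + 1) / (2 * F3 * F2)"
    unfolding g_def F1_def F2_def F3_def F4_def by simp
  have "F2 > 0" "F3 > 0" "A > 0"
    unfolding F2_def F3_def A_def by simp_all
  then have "A * (real m + 1) * g a n (Suc m) = B * (real m + 2) * g a n m"
    unfolding g_Suc_eq g_eq by (simp add: field_simps)
  then show ?thesis
    unfolding A_def B_def .
qed

theorem theorem3:
  fixes m n a :: nat
  assumes "1 \<le> m" and "m \<le> n + 1" and "n \<le> a"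
  shows "(\<Sum>k=0..m-1. 1 / (real (m choose k) * real (a choose (n - k))))
         = g a n m * (\<Sum>i=0..m-1. C a n i / (g a n i * real (i + 2) * real (a + i - n + 2)))"
proof -
  have "(\<Sum>k<m. recip_binom_prod a n m k)
      = g a n m * (\<Sum>i<m. C a n i / (g a n i * ((real a + i - n + 2) * (real i + 2))))"
  proof (rule linear_recurrence_solution[where N = "n + 1"])
    fix i assume "i < n + 1"
    then have "i \<le> n" by simp
    with assms(3) show "(real a + i + 4) * (real i + 1) * (\<Sum>k<Suc i. recip_binom_prod a n (Suc i) k)
        = (real a + i - n + 2) * (real i + 2) * (\<Sum>k<i. recip_binom_prod a n i k) + C a n i"
      and "(real a + i + 4) * (real i + 1) * g a n (Suc i) = (real a + i - n + 2) * (real i + 2) * g a n i"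
      and "(real a + i + 4) * (real i + 1) \<noteq> 0 \<and> (real a + i - n + 2) * (real i + 2) \<noteq> 0 \<and> g a n i \<noteq> 0"
      using recip_binom_sum_recurrence g_Suc g_pos[OF assms(3), of i] by auto
  qed (use assms in auto)
  moreover have "{0..m-1} = {..<m}"
    using assms(1) by auto
  moreover have "(\<Sum>i<m. C a n i / (g a n i * ((real a + i - n + 2) * (real i + 2))))
      = (\<Sum>i<m. C a n i / (g a n i * real (i + 2) * real (a + i - n + 2)))"
    using assms(3) by (intro sum.cong) (simp_all add: of_nat_diff algebra_simps)
  ultimately show ?thesis
    unfolding recip_binom_prod_def by simp
qed

end
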